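(* Let $(E,X,Y)$, with $X=(X_1,\dots,X_d)$, be generated by a structural causal model whose graph is a DAG, whose distribution is faithful (and Markov) with respect to it, and in which $E$ is exogenous. Suppose $X=X_O\,\dot\cup\,X_H$, where only the variables $X_O$ are observed. Define $\mathcal{I}_O:=\{S\subseteq O\mid Y\perp\!\!\!\perp E\mid X_S\}$, call $S\subseteq O$ minimally invariant (among observed sets) if $S\in\mathcal{I}_O$ and no proper subset of $S$ lies in $\mathcal{I}_O$, and let $S_{\mathrm{IAS},O}$ be the union of all such sets (the empty set if there are none). Then $S_{\mathrm{IAS},O}\subseteq\mathrm{AN}_Y$.
   Context: $O\subseteq[d]$ indexes the observed predictors and $X_S=(X_j)_{j\in S}$. $\mathrm{AN}_Y$ denotes the set of ancestors of $Y$ in the DAG over all variables (observed and hidden), indices identified with variables. *)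

theory Defs
  imports Main
begin

datatype var = Env | Resp | Cov nat

definition verts :: "nat \<Rightarrow> var set" where
  "verts d = {Env, Resp} \<union> Cov ` {1..d}"

text \<open>A directed graph is an edge predicate G u v (meaning u \<rightarrow> v).\<close>
definition is_dag :: "nat \<Rightarrow> (var \<Rightarrow> var \<Rightarrow> bool) \<Rightarrow> bool" where
  "is_dag d G \<longleftrightarrow> (\<forall>u v. G u v \<longrightarrow> u \<in> verts d \<and> v \<in> verts d) \<and> (\<forall>v. \<not> G\<^sup>+\<^sup>+ v v)"

definition adj :: "(var \<Rightarrow> var \<Rightarrow> bool) \<Rightarrow> var \<Rightarrow> var \<Rightarrow> bool" where
  "adj G u v \<longleftrightarrow> G u v \<or> G v u"

definition anc :: "(var \<Rightarrow> var \<Rightarrow> bool) \<Rightarrow> var \<Rightarrow> var set" where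
  "anc G v = {u. G\<^sup>*\<^sup>* u v}"

definition is_path :: "(var \<Rightarrow> var \<Rightarrow> bool) \<Rightarrow> var list \<Rightarrow> var \<Rightarrow> var \<Rightarrow> bool" where
  "is_path G p a b \<longleftrightarrow> 2 \<le> length p \<and> hd p = a \<and> last p = b \<and> distinct p \<and>
     (\<forall>i. Suc i < length p \<longrightarrow> adj G (p ! i) (p ! Suc i))"

definition collider :: "(var \<Rightarrow> var \<Rightarrow> bool) \<Rightarrow> var list \<Rightarrow> nat \<Rightarrow> bool" where
  "collider G p i \<longleftrightarrow> G (p ! (i - 1)) (p ! i) \<and> G (p ! Suc i) (p ! i)"

definition blocked :: "(var \<Rightarrow> var \<Rightarrow> bool) \<Rightarrow> var set \<Rightarrow> var list \<Rightarrow> bool" where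
  "blocked G Z p \<longleftrightarrow> (\<exists>i. 0 < i \<and> Suc i < length p \<and>
      ((\<not> collider G p i \<and> p ! i \<in> Z) \<or>
       (collider G p i \<and> (\<forall>z\<in>Z. \<not> G\<^sup>*\<^sup>* (p ! i) z))))"

definition dsep :: "(var \<Rightarrow> var \<Rightarrow> bool) \<Rightarrow> var \<Rightarrow> var \<Rightarrow> var set \<Rightarrow> bool" where
  "dsep G a b Z \<longleftrightarrow> (\<forall>p. is_path G p a b \<longrightarrow> blocked G Z p)"

text \<open>ci a b Z abstracts the conditional independence statement a \<perp> b | Z of the distribution.
  Observed invariant sets, minimally invariant sets, and S_IAS,O.\<close>
definition inv_sets :: "(var \<Rightarrow> var \<Rightarrow> var set \<Rightarrow> bool) \<Rightarrow> nat set \<Rightarrow> nat set set" where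
  "inv_sets ci Obs = {S. S \<subseteq> Obs \<and> ci Resp Env (Cov ` S)}"

definition min_inv :: "(var \<Rightarrow> var \<Rightarrow> var set \<Rightarrow> bool) \<Rightarrow> nat set \<Rightarrow> nat set \<Rightarrow> bool" where
  "min_inv ci Obs S \<longleftrightarrow> S \<in> inv_sets ci Obs \<and> (\<forall>S'. S' \<subset> S \<longrightarrow> S' \<notin> inv_sets ci Obs)"

definition S_IAS :: "(var \<Rightarrow> var \<Rightarrow> var set \<Rightarrow> bool) \<Rightarrow> nat set \<Rightarrow> nat set" where
  "S_IAS ci Obs = \<Union> {S. min_inv ci Obs S}"

end

theory Submission
  imports Defs
begin

text \<open>If Z d-separates Y from E, so does Z \<inter> AN_Y when E has no parents. Indeed, on a path
  from Y to E that is open given Z \<inter> AN_Y every collider has a descendant in AN_Y, so lies in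
  AN_Y itself; following the edges of the path away from E (which cannot be entered) then
  shows that every interior vertex is an ancestor of Y. Hence whatever vertex blocks the path
  given Z also blocks it given Z \<inter> AN_Y. By Markov and faithfulness, the part of an
  invariant set lying in AN_Y is again invariant, so a minimally invariant set lies in AN_Y.\<close>

lemma anc_edge: "G u v \<Longrightarrow> v \<in> anc G w \<Longrightarrow> u \<in> anc G w"
  by (simp add: anc_def converse_rtranclp_into_rtranclp)

lemma is_path_first: "is_path G p a b \<Longrightarrow> p ! 0 = a"
  by (metis is_path_def hd_conv_nth list.size(3) not_numeral_le_zero)

lemma is_path_last: "is_path G p a b \<Longrightarrow> p ! (length p - 1) = b"
  by (metis is_path_def last_conv_nth list.size(3) not_numeral_le_zero)

lemma is_path_adj: "is_path G p a b \<Longrightarrow> Suc i < length p \<Longrightarrow> adj G (p ! i) (p ! Suc i)"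
  by (simp add: is_path_def)

lemma anc_of_backward_edge:
  assumes path: "is_path G p a b"
    and colliders: "\<And>k. 0 < k \<Longrightarrow> Suc k < length p \<Longrightarrow> collider G p k \<Longrightarrow> p ! k \<in> anc G a"
  shows "Suc i < length p \<Longrightarrow> G (p ! Suc i) (p ! i) \<Longrightarrow> p ! Suc i \<in> anc G a"
proof (induction i)
  case 0
  then show ?case using is_path_first[OF path] by (simp add: anc_def)
next
  case (Suc i)
  have "G (p ! i) (p ! Suc i) \<or> G (p ! Suc i) (p ! i)"
    using is_path_adj[OF path] Suc.prems by (simp add: adj_def)
  then have "p ! Suc i \<in> anc G a"
  proof
    assume "G (p ! i) (p ! Suc i)"
    then have "collider G p (Suc i)" using Suc.prems by (simp add: collider_def)
    then show ?thesis using colliders Suc.prems by simp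
  next
    assume "G (p ! Suc i) (p ! i)"
    then show ?thesis using Suc.IH Suc.prems by simp
  qed
  then show ?case using Suc.prems anc_edge by blast
qed

lemma anc_of_forward_edge:
  assumes path: "is_path G p a b"
    and no_parent: "\<And>u. \<not> G u b"
    and colliders: "\<And>k. 0 < k \<Longrightarrow> Suc k < length p \<Longrightarrow> collider G p k \<Longrightarrow> p ! k \<in> anc G a"
    and i: "Suc i < length p"
    and edge: "G (p ! i) (p ! Suc i)"
  shows "p ! i \<in> anc G a"
proof -
  have "i \<le> length p - 2" using i by simp
  then show ?thesis using edge
  proof (induction i rule: inc_induct)
    case base
    have "2 \<le> length p" using path by (simp add: is_path_def)
    then have "Suc (length p - 2) = length p - 1" by arith
    then show ?case using base is_path_last[OF path] no_parent by metis
  next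
    case (step n)
    have "G (p ! Suc n) (p ! Suc (Suc n)) \<or> G (p ! Suc (Suc n)) (p ! Suc n)"
      using is_path_adj[OF path] step.hyps by (simp add: adj_def)
    then have "p ! Suc n \<in> anc G a"
    proof
      assume "G (p ! Suc n) (p ! Suc (Suc n))"
      then show ?thesis using step.IH by simp
    next
      assume "G (p ! Suc (Suc n)) (p ! Suc n)"
      then have "collider G p (Suc n)" using step.prems by (simp add: collider_def)
      then show ?thesis using colliders step.hyps by simp
    qed
    then show ?case using step.prems anc_edge by blast
  qed
qed

lemma interior_in_anc:
  assumes path: "is_path G p a b"
    and no_parent: "\<And>u. \<not> G u b"
    and colliders: "\<And>k. 0 < k \<Longrightarrow> Suc k < length p \<Longrightarrow> collider G p k \<Longrightarrow> p ! k \<in> anc G a"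
    and i: "0 < i" "Suc i < length p"
  shows "p ! i \<in> anc G a"
proof (cases "collider G p i")
  case True
  then show ?thesis using colliders i by blast
next
  case False
  have "adj G (p ! (i - 1)) (p ! i)" using is_path_adj[OF path, of "i - 1"] i by simp
  moreover have "adj G (p ! i) (p ! Suc i)" using is_path_adj[OF path] i by simp
  ultimately have "G (p ! Suc (i - 1)) (p ! (i - 1)) \<or> G (p ! i) (p ! Suc i)"
    using False i by (auto simp: collider_def adj_def)
  then show ?thesis
    using anc_of_backward_edge[OF path colliders, of "i - 1"]
      anc_of_forward_edge[OF path no_parent colliders, of i] i
    by auto
qed

lemma dsep_inter_anc:
  assumes no_parent: "\<And>u. \<not> G u b"
    and sep: "dsep G a b Z"
  shows "dsep G a b (Z \<inter> anc G a)"
  unfolding dsep_def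
proof (intro allI impI)
  fix p assume path: "is_path G p a b"
  show "blocked G (Z \<inter> anc G a) p"
  proof (rule ccontr)
    assume open_path: "\<not> blocked G (Z \<inter> anc G a) p"
    have colliders: "p ! k \<in> anc G a"
      if "0 < k" "Suc k < length p" "collider G p k" for k
    proof -
      have "\<exists>z \<in> Z \<inter> anc G a. G\<^sup>*\<^sup>* (p ! k) z"
        using open_path that unfolding blocked_def by blast
      then show ?thesis by (auto simp: anc_def intro: rtranclp_trans)
    qed
    obtain i where i: "0 < i" "Suc i < length p"
      and "(\<not> collider G p i \<and> p ! i \<in> Z) \<or> (collider G p i \<and> (\<forall>z\<in>Z. \<not> G\<^sup>*\<^sup>* (p ! i) z))"
      using sep path unfolding dsep_def blocked_def by blast
    moreover have "p ! i \<in> anc G a"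
      using interior_in_anc[OF path no_parent colliders i] by blast
    ultimately have "(\<not> collider G p i \<and> p ! i \<in> Z \<inter> anc G a) \<or>
        (collider G p i \<and> (\<forall>z\<in>Z \<inter> anc G a. \<not> G\<^sup>*\<^sup>* (p ! i) z))"
      by blast
    then show False using open_path i unfolding blocked_def by blast
  qed
qed

lemma min_inv_no_invariant_subset:
  assumes "min_inv ci Obs S" "S' \<subseteq> S" "ci Resp Env (Cov ` S')"
  shows "S' = S"
  using assms unfolding min_inv_def inv_sets_def by blast

theorem proposition6:
  fixes d :: nat and G :: "var \<Rightarrow> var \<Rightarrow> bool" and Obs :: "nat set"
    and ci :: "var \<Rightarrow> var \<Rightarrow> var set \<Rightarrow> bool"
  assumes dag: "is_dag d G"
    and exogenous: "\<forall>u. \<not> G u Env"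
    and observed: "Obs \<subseteq> {1..d}"
    and markov_faithful: "\<forall>Z. Z \<subseteq> Cov ` {1..d} \<longrightarrow> (ci Resp Env Z \<longleftrightarrow> dsep G Resp Env Z)"
  shows "S_IAS ci Obs \<subseteq> {j. Cov j \<in> anc G Resp}"
proof
  fix j assume "j \<in> S_IAS ci Obs"
  then obtain S where min: "min_inv ci Obs S" and "j \<in> S" unfolding S_IAS_def by blast
  define S' where "S' = S \<inter> {j. Cov j \<in> anc G Resp}"
  have "S \<subseteq> Obs" "ci Resp Env (Cov ` S)" using min unfolding min_inv_def inv_sets_def by auto
  moreover have covs: "Cov ` S \<subseteq> Cov ` {1..d}" using \<open>S \<subseteq> Obs\<close> observed by auto
  ultimately have "dsep G Resp Env (Cov ` S)" using markov_faithful by blast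
  then have "dsep G Resp Env (Cov ` S \<inter> anc G Resp)"
    using dsep_inter_anc exogenous by blast
  moreover have "Cov ` S' = Cov ` S \<inter> anc G Resp" unfolding S'_def by auto
  moreover have "Cov ` S' \<subseteq> Cov ` {1..d}" using covs unfolding S'_def by auto
  ultimately have "ci Resp Env (Cov ` S')" using markov_faithful by simp
  then have "S' = S" using min_inv_no_invariant_subset[OF min] unfolding S'_def by blast
  then show "j \<in> {j. Cov j \<in> anc G Resp}" using \<open>j \<in> S\<close> unfolding S'_def by blast
qed

end
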